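(* Let $n \geq 1$ and $d \geq 0$ be integers. If $F$ is a graph with maximum degree at most $d$ on at least $dn + 2^n$ vertices, then the complement of $F$ contains a copy of $Q_n$. As a consequence, $r(Q_n, K_3) \leq 2^n(n+1)$ for every $n \geq 1$.
   Context: The hypercube $Q_n$ is the graph on vertex set $\{0,1\}^n$ in which two vertices are adjacent if and only if they differ in exactly one coordinate. For graphs $G,H$, $r(G,H)$ is the smallest $N$ such that every red/blue edge-coloring of $K_N$ contains a red copy of $G$ or a blue copy of $H$. *)

theory Defs
  imports Main
begin

text \<open>Simple graphs are given by a vertex set V and an edge relation E
  (assumed symmetric and irreflexive where relevant); only edges inside V matter.\<close>

definition hypercube_verts :: "nat \<Rightarrow> bool list set" where
  "hypercube_verts n = {x. length x = n}"

definition hypercube_adj :: "nat \<Rightarrow> bool list \<Rightarrow> bool list \<Rightarrow> bool" where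
  "hypercube_adj n x y \<longleftrightarrow> card {i. i < n \<and> x ! i \<noteq> y ! i} = 1"

definition has_copy ::
  "'a set \<Rightarrow> ('a \<Rightarrow> 'a \<Rightarrow> bool) \<Rightarrow> 'b set \<Rightarrow> ('b \<Rightarrow> 'b \<Rightarrow> bool) \<Rightarrow> bool" where
  "has_copy VG EG V E \<longleftrightarrow>
     (\<exists>f. inj_on f VG \<and> f ` VG \<subseteq> V \<and>
          (\<forall>u\<in>VG. \<forall>v\<in>VG. EG u v \<longrightarrow> E (f u) (f v)))"

definition max_degree_le :: "'a set \<Rightarrow> ('a \<Rightarrow> 'a \<Rightarrow> bool) \<Rightarrow> nat \<Rightarrow> bool" where
  "max_degree_le V E d \<longleftrightarrow> (\<forall>v\<in>V. card {u\<in>V. E v u} \<le> d)"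

definition compl_edges :: "('a \<Rightarrow> 'a \<Rightarrow> bool) \<Rightarrow> 'a \<Rightarrow> 'a \<Rightarrow> bool" where
  "compl_edges E u v \<longleftrightarrow> u \<noteq> v \<and> \<not> E u v"

text \<open>Red/blue colouring of K_N on vertex set {0..<N}: c u v = True means red.\<close>
definition ramsey_prop ::
  "'a set \<Rightarrow> ('a \<Rightarrow> 'a \<Rightarrow> bool) \<Rightarrow> 'b set \<Rightarrow> ('b \<Rightarrow> 'b \<Rightarrow> bool) \<Rightarrow> nat \<Rightarrow> bool" where
  "ramsey_prop VG EG VH EH N \<longleftrightarrow>
     (\<forall>c :: nat \<Rightarrow> nat \<Rightarrow> bool. (\<forall>u v. c u v = c v u) \<longrightarrow>
        has_copy VG EG {0..<N} (\<lambda>u v. u \<noteq> v \<and> c u v) \<or>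
        has_copy VH EH {0..<N} (\<lambda>u v. u \<noteq> v \<and> \<not> c u v))"

definition ramsey_number ::
  "'a set \<Rightarrow> ('a \<Rightarrow> 'a \<Rightarrow> bool) \<Rightarrow> 'b set \<Rightarrow> ('b \<Rightarrow> 'b \<Rightarrow> bool) \<Rightarrow> nat" where
  "ramsey_number VG EG VH EH = (LEAST N. ramsey_prop VG EG VH EH N)"

definition K3_verts :: "nat set" where "K3_verts = {0, 1, 2}"
definition K3_adj :: "nat \<Rightarrow> nat \<Rightarrow> bool" where "K3_adj u v \<longleftrightarrow> u \<noteq> v"

end

theory Submission
  imports Defs
begin

(* Both parts of the theorem follow from a greedy embedding argument.
   Let G be a graph on m vertices in which every vertex has at most D neighbours,
   and H a graph of maximum degree at most d on at least d*D + m vertices.  Embed the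
   vertices of G one by one into the complement of H: when a vertex x is placed,
   the forbidden images are the images of the vertices already placed (fewer than m)
   together with the H-neighbourhoods of the images of the at most D already placed
   G-neighbours of x (at most d*D vertices), so a free image always exists.
   Applied to G = Q_n (2^n vertices, degree n) this is the first claim.
   For the Ramsey bound, colour K_N with N >= (m - 1)*D + m: either there is a blue
   triangle, or some vertex has m blue neighbours, which then span a red clique and
   hence contain a red copy of G, or the blue graph has maximum degree at most m - 1
   and the greedy lemma yields G in its complement, the red graph.  For Q_n this gives
   N = (2^n - 1)*n + 2^n <= 2^n*(n + 1). *)

definition copy_map ::
  "'b set \<Rightarrow> ('b \<Rightarrow> 'b \<Rightarrow> bool) \<Rightarrow> 'a set \<Rightarrow> ('a \<Rightarrow> 'a \<Rightarrow> bool) \<Rightarrow> ('b \<Rightarrow> 'a) \<Rightarrow> bool" where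
  "copy_map VG EG V E f \<longleftrightarrow>
     inj_on f VG \<and> f ` VG \<subseteq> V \<and> (\<forall>u\<in>VG. \<forall>v\<in>VG. EG u v \<longrightarrow> E (f u) (f v))"

lemma has_copy_iff_copy_map: "has_copy VG EG V E \<longleftrightarrow> (\<exists>f. copy_map VG EG V E f)"
  unfolding has_copy_def copy_map_def by blast

lemma card_UN_neighbourhoods_le:
  assumes "finite N" "f ` N \<subseteq> V" "max_degree_le V E d"
  shows "card (\<Union>y\<in>N. {u\<in>V. E (f y) u}) \<le> card N * d"
proof -
  have "card (\<Union>y\<in>N. {u\<in>V. E (f y) u}) \<le> (\<Sum>y\<in>N. card {u\<in>V. E (f y) u})"
    using assms(1) by (rule card_UN_le)
  also have "\<dots> \<le> (\<Sum>y\<in>N. d)"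
    using assms(2,3) unfolding max_degree_le_def by (intro sum_mono) auto
  finally show ?thesis by simp
qed

lemma copy_map_extend:
  assumes f: "copy_map S EG V (compl_edges E) f"
    and fin: "finite S" "finite V" and x: "x \<notin> S" "\<not> EG x x"
    and symE: "\<forall>u v. E u v \<longrightarrow> E v u" and degE: "max_degree_le V E d"
    and degx: "card {y\<in>S. EG x y \<or> EG y x} \<le> D"
    and size: "card S + d * D < card V"
  obtains z where "copy_map (insert x S) EG V (compl_edges E) (f(x := z))"
proof -
  define N where "N = {y\<in>S. EG x y \<or> EG y x}"
  define B where "B = f ` S \<union> (\<Union>y\<in>N. {u\<in>V. E (f y) u})"
  have fS: "f ` S \<subseteq> V" using f unfolding copy_map_def by blast
  have "card (\<Union>y\<in>N. {u\<in>V. E (f y) u}) \<le> card N * d"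
    using fin fS degE unfolding N_def by (intro card_UN_neighbourhoods_le) auto
  also have "\<dots> \<le> d * D" using degx unfolding N_def by (simp add: mult.commute)
  finally have "card (\<Union>y\<in>N. {u\<in>V. E (f y) u}) \<le> d * D" .
  moreover have "card (f ` S) \<le> card S" using fin(1) by (rule card_image_le)
  ultimately have "card B < card V"
    using size card_Un_le[of "f ` S" "\<Union>y\<in>N. {u\<in>V. E (f y) u}"] unfolding B_def by linarith
  moreover have "finite B" using fin fS unfolding B_def N_def by auto
  ultimately have "\<not> V \<subseteq> B" using card_mono by (metis not_le)
  then obtain z where z: "z \<in> V" "z \<notin> B" by blast
  have free: "z \<noteq> f y \<and> \<not> E (f y) z \<and> \<not> E z (f y)" if "y \<in> N" for y
    using z that symE unfolding B_def N_def by blast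
  have "copy_map (insert x S) EG V (compl_edges E) (f(x := z))"
    using f z x free unfolding copy_map_def compl_edges_def inj_on_def N_def B_def
    by (auto simp: eq_commute)
  then show ?thesis by (rule that)
qed

lemma greedy_complement_copy:
  assumes finG: "finite VG" and irrG: "\<forall>x\<in>VG. \<not> EG x x"
    and degG: "max_degree_le VG (\<lambda>x y. EG x y \<or> EG y x) D"
    and finH: "finite V" and symE: "\<forall>u v. E u v \<longrightarrow> E v u"
    and degE: "max_degree_le V E d" and size: "d * D + card VG \<le> card V"
  shows "has_copy VG EG V (compl_edges E)"
proof -
  have "\<exists>f. copy_map S EG V (compl_edges E) f" if "S \<subseteq> VG" for S
    using finite_subset[OF that finG] that
  proof (induction S rule: finite_induct)
    case empty
    show ?case unfolding copy_map_def by simp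
  next
    case (insert x S)
    then obtain f where f: "copy_map S EG V (compl_edges E) f" by blast
    have xVG: "x \<in> VG" using insert.prems by blast
    have "card {y\<in>S. EG x y \<or> EG y x} \<le> card {y\<in>VG. EG x y \<or> EG y x}"
      using insert.prems finG by (intro card_mono) auto
    also have "\<dots> \<le> D" using degG xVG unfolding max_degree_le_def by blast
    finally have degx: "card {y\<in>S. EG x y \<or> EG y x} \<le> D" .
    have "card (insert x S) \<le> card VG" using insert.prems finG by (rule card_mono[rotated])
    then have "card S + d * D < card V" using insert.hyps size by simp
    then show ?case
      using copy_map_extend[OF f insert.hyps(1) finH insert.hyps(2) _ symE degE degx]
        irrG xVG by metis
  qed
  then show ?thesis using has_copy_iff_copy_map by blast
qed

lemma has_copy_in_clique:
  assumes "finite VG" "\<forall>x\<in>VG. \<not> EG x x" "finite W" "W \<subseteq> V" "card VG \<le> card W"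
    and clique: "\<forall>u\<in>W. \<forall>v\<in>W. u \<noteq> v \<longrightarrow> E u v"
  shows "has_copy VG EG V E"
proof -
  obtain f where f: "inj_on f VG" "f ` VG \<subseteq> W"
    using card_le_inj[OF assms(1,3,5)] by blast
  have "E (f u) (f v)" if "u \<in> VG" "v \<in> VG" "EG u v" for u v
  proof -
    have "u \<noteq> v" using that assms(2) by blast
    then have "f u \<noteq> f v" using f(1) that(1,2) by (meson inj_onD)
    then show ?thesis using clique f(2) that(1,2) by blast
  qed
  then show ?thesis unfolding has_copy_def using f assms(4) by blast
qed

lemma has_copy_K3:
  assumes "a \<in> V" "b \<in> V" "c \<in> V" "E a b" "E a c" "E b c"
    and sym: "\<forall>u v. E u v \<longrightarrow> E v u" and irr: "\<forall>v. \<not> E v v"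
  shows "has_copy K3_verts K3_adj V E"
proof -
  let ?f = "\<lambda>i::nat. if i = 0 then a else if i = 1 then b else c"
  have "a \<noteq> b" "a \<noteq> c" "b \<noteq> c" using assms(4-6) irr by metis+
  then have inj: "inj_on ?f {0, 1, 2}" by (simp add: inj_on_def)
  have "E b a" "E c a" "E c b" using assms(4-6) sym by blast+
  then have "E (?f u) (?f v)" if "u \<in> {0, 1, 2}" "v \<in> {0, 1, 2}" "u \<noteq> v" for u v
    using that assms(4-6) by auto
  then have "copy_map K3_verts K3_adj V E ?f"
    using inj assms(1-3) unfolding copy_map_def K3_verts_def K3_adj_def by auto
  then show ?thesis using has_copy_iff_copy_map by blast
qed

lemma ramsey_prop_K3:
  assumes finG: "finite VG" and irrG: "\<forall>x\<in>VG. \<not> EG x x"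
    and degG: "max_degree_le VG (\<lambda>x y. EG x y \<or> EG y x) D"
    and size: "(card VG - 1) * D + card VG \<le> N"
  shows "ramsey_prop VG EG K3_verts K3_adj N"
  unfolding ramsey_prop_def
proof (intro allI impI)
  fix c :: "nat \<Rightarrow> nat \<Rightarrow> bool"
  assume symc: "\<forall>u v. c u v = c v u"
  define red where "red = (\<lambda>u v :: nat. u \<noteq> v \<and> c u v)"
  define blue where "blue = (\<lambda>u v :: nat. u \<noteq> v \<and> \<not> c u v)"
  have symB: "\<forall>u v. blue u v \<longrightarrow> blue v u" using symc unfolding blue_def by auto
  consider (triangle) a b e where "a \<in> {0..<N}" "b \<in> {0..<N}" "e \<in> {0..<N}"
      "blue a b" "blue a e" "blue b e"
    | (big_nbhd) v where "v \<in> {0..<N}" "card VG \<le> card {u\<in>{0..<N}. blue v u}"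
      "\<forall>a\<in>{0..<N}. \<forall>b\<in>{0..<N}. \<forall>e\<in>{0..<N}. \<not> (blue a b \<and> blue a e \<and> blue b e)"
    | (small_deg) "max_degree_le {0..<N} blue (card VG - 1)"
  proof -
    have "max_degree_le {0..<N} blue (card VG - 1)"
      if "\<forall>v\<in>{0..<N}. card {u\<in>{0..<N}. blue v u} < card VG"
      using that unfolding max_degree_le_def by fastforce
    then show thesis using that by (meson not_le)
  qed
  then show "has_copy VG EG {0..<N} red \<or> has_copy K3_verts K3_adj {0..<N} blue"
  proof cases
    case triangle
    moreover have "\<forall>v. \<not> blue v v" unfolding blue_def by simp
    ultimately show ?thesis using has_copy_K3[OF _ _ _ _ _ _ symB] by blast
  next
    case big_nbhd
    (* the blue neighbourhood of v is a red clique, as there is no blue triangle *)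
    let ?W = "{u\<in>{0..<N}. blue v u}"
    have "\<forall>u\<in>?W. \<forall>w\<in>?W. u \<noteq> w \<longrightarrow> red u w"
      using big_nbhd unfolding red_def blue_def by blast
    moreover have "finite ?W" "?W \<subseteq> {0..<N}" by auto
    ultimately have "has_copy VG EG {0..<N} red"
      using has_copy_in_clique[of VG EG ?W "{0..<N}" red, OF finG irrG] big_nbhd(2) by blast
    then show ?thesis by blast
  next
    case small_deg
    have "has_copy VG EG {0..<N} (compl_edges blue)"
      using size small_deg symB
      by (intro greedy_complement_copy[OF finG irrG degG]) (auto simp: mult.commute)
    moreover have "compl_edges blue = red"
      unfolding compl_edges_def red_def blue_def by (intro ext) auto
    ultimately show ?thesis by simp
  qed
qed

lemma hypercube_finite: "finite (hypercube_verts n)"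
  and hypercube_card: "card (hypercube_verts n) = 2 ^ n"
proof -
  have eq: "hypercube_verts n = {xs. set xs \<subseteq> (UNIV :: bool set) \<and> length xs = n}"
    unfolding hypercube_verts_def by auto
  show "finite (hypercube_verts n)" unfolding eq by (rule finite_lists_length_eq) simp
  show "card (hypercube_verts n) = 2 ^ n" unfolding eq by (subst card_lists_length_eq) auto
qed

lemma hypercube_adj_sym: "hypercube_adj n x y = hypercube_adj n y x"
  unfolding hypercube_adj_def by (simp add: eq_commute)

lemma hypercube_adj_irrefl: "\<not> hypercube_adj n x x"
  unfolding hypercube_adj_def by simp

lemma hypercube_adj_flip:
  assumes "x \<in> hypercube_verts n" "y \<in> hypercube_verts n" "hypercube_adj n x y"
  shows "y \<in> (\<lambda>i. x[i := \<not> x ! i]) ` {..<n}"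
proof -
  obtain i where i: "{j. j < n \<and> x ! j \<noteq> y ! j} = {i}"
    using assms(3) unfolding hypercube_adj_def by (meson card_1_singletonE)
  have "y = x[i := \<not> x ! i]"
  proof (rule nth_equalityI)
    show "length y = length (x[i := \<not> x ! i])"
      using assms(1,2) unfolding hypercube_verts_def by simp
  next
    fix j assume "j < length y"
    then have "j < n" using assms(2) unfolding hypercube_verts_def by simp
    then show "y ! j = x[i := \<not> x ! i] ! j"
      using i assms(1) unfolding hypercube_verts_def by (cases "j = i") auto
  qed
  moreover have "i < n" using i by auto
  ultimately show ?thesis by blast
qed

lemma hypercube_degree:
  "max_degree_le (hypercube_verts n) (\<lambda>x y. hypercube_adj n x y \<or> hypercube_adj n y x) n"
  unfolding max_degree_le_def
proof
  fix x assume x: "x \<in> hypercube_verts n"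
  have "{y\<in>hypercube_verts n. hypercube_adj n x y \<or> hypercube_adj n y x}
      \<subseteq> (\<lambda>i. x[i := \<not> x ! i]) ` {..<n}"
    using hypercube_adj_flip[OF x] hypercube_adj_sym by blast
  then have "card {y\<in>hypercube_verts n. hypercube_adj n x y \<or> hypercube_adj n y x}
      \<le> card ((\<lambda>i. x[i := \<not> x ! i]) ` {..<n})" by (intro card_mono) auto
  also have "\<dots> \<le> n" using card_image_le[of "{..<n}"] by simp
  finally show "card {y\<in>hypercube_verts n. hypercube_adj n x y \<or> hypercube_adj n y x} \<le> n" .
qed

theorem mainTheorem5:
  shows "(\<forall>(n::nat) (d::nat) (V::'a set) (E::'a \<Rightarrow> 'a \<Rightarrow> bool).
            n \<ge> 1 \<longrightarrow> finite V \<longrightarrow>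
            (\<forall>u v. E u v \<longrightarrow> E v u) \<longrightarrow> (\<forall>v. \<not> E v v) \<longrightarrow>
            max_degree_le V E d \<longrightarrow> card V \<ge> d * n + 2 ^ n \<longrightarrow>
            has_copy (hypercube_verts n) (hypercube_adj n) V (compl_edges E))
       \<and> (\<forall>n::nat. n \<ge> 1 \<longrightarrow>
            ramsey_number (hypercube_verts n) (hypercube_adj n) K3_verts K3_adj
              \<le> 2 ^ n * (n + 1))"
proof (intro conjI allI impI)
  fix n d :: nat and V :: "'a set" and E
  assume "finite V" "\<forall>u v. E u v \<longrightarrow> E v u" "max_degree_le V E d" "card V \<ge> d * n + 2 ^ n"
  then show "has_copy (hypercube_verts n) (hypercube_adj n) V (compl_edges E)"
    using greedy_complement_copy[OF hypercube_finite _ hypercube_degree]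
      hypercube_adj_irrefl hypercube_card by metis
next
  fix n :: nat
  have "(card (hypercube_verts n) - 1) * n + card (hypercube_verts n) \<le> 2 ^ n * (n + 1)"
    unfolding hypercube_card by (simp add: algebra_simps)
  then have "ramsey_prop (hypercube_verts n) (hypercube_adj n) K3_verts K3_adj (2 ^ n * (n + 1))"
    using ramsey_prop_K3[OF hypercube_finite _ hypercube_degree] hypercube_adj_irrefl by blast
  then show "ramsey_number (hypercube_verts n) (hypercube_adj n) K3_verts K3_adj \<le> 2 ^ n * (n + 1)"
    unfolding ramsey_number_def by (rule Least_le)
qed

end
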